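(* Consider the Probabilistic Serial mechanism with $n$ agents and $m \le n$ items. Agent 1 has a strict linear order $\succ_1$ over the items; let $\overline{O}$ be the set of its $k$ most preferred items under $\succ_1$ ($1 \le k \le m$). Fix arbitrary reported strict linear orders of agents $2,\dots,n$, and consider the truthful run in which agent 1 reports $\succ_1$. Let $T$ be the time at which the last item of $\overline{O}$ is exhausted in this run, and suppose $\tfrac12 \le T < \tfrac23$. Suppose there is an item $o^* \in \overline{O}$ of which agent 1 receives a positive amount such that, at the moment $o^*$ is exhausted, the agents eating $o^*$ are exactly agent 1 and one other agent, called agent 2. Let $t_1$ be the time at which agent 1 starts eating $o^*$ and $t_1+t_2$ the time at which $o^*$ is exhausted, and let $O_3$ be the set of items exhausted during the time interval $(t_1+t_2, T]$ in the truthful run. Then for every item in $O_3$, at the moment it is exhausted in the truthful run, there are at least two agents other than agents 1 and 2 eating it.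
   Context: Probabilistic Serial: there are $n$ agents and $m$ divisible items of unit supply; each agent reports a strict linear order over all items. Starting at time $0$, every agent consumes at rate $1$ per unit time its most preferred item (according to its report) among those with positive remaining supply; when an item is exhausted, agents consuming it move to their most preferred item still available; this continues until all items are exhausted. *)

theory Defs
  imports Complex_Main
begin

text \<open>Preferences: P i is a list of all items, most preferred first
  (a strict linear order). The run is simulated phase by phase: within a phase,
  every agent eats its most preferred remaining item; the phase ends when the
  first of the eaten items is exhausted.\<close>

definition strict_order_on :: "'a set \<Rightarrow> 'a list \<Rightarrow> bool" where
  "strict_order_on Items l \<longleftrightarrow> distinct l \<and> set l = Items"

definition top_item :: "(nat \<Rightarrow> 'a list) \<Rightarrow> nat \<Rightarrow> 'a set \<Rightarrow> 'a" where
  "top_item P i R = hd (filter (\<lambda>y. y \<in> R) (P i))"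

definition eat_rate :: "nat set \<Rightarrow> (nat \<Rightarrow> 'a list) \<Rightarrow> 'a set \<Rightarrow> 'a \<Rightarrow> real" where
  "eat_rate A P R x = real (card {i \<in> A. top_item P i R = x})"

text \<open>State: (current time, remaining items, remaining supply).\<close>
type_synonym 'a ps_state = "real \<times> 'a set \<times> ('a \<Rightarrow> real)"

definition ps_step :: "nat set \<Rightarrow> (nat \<Rightarrow> 'a list) \<Rightarrow> 'a ps_state \<Rightarrow> 'a ps_state" where
  "ps_step A P st =
     (let (t, R, s) = st in
      if R = {} then st else
      let Eaten = (\<lambda>i. top_item P i R) ` A;
          d = Min ((\<lambda>x. s x / eat_rate A P R x) ` Eaten)
      in (t + d,
          R - {x \<in> Eaten. s x / eat_rate A P R x = d},
          (\<lambda>x. s x - eat_rate A P R x * d)))"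

primrec ps_state :: "nat set \<Rightarrow> (nat \<Rightarrow> 'a list) \<Rightarrow> 'a set \<Rightarrow> nat \<Rightarrow> 'a ps_state" where
  "ps_state A P Items 0 = (0, Items, (\<lambda>_. 1))"
| "ps_state A P Items (Suc k) = ps_step A P (ps_state A P Items k)"

definition ps_time :: "nat set \<Rightarrow> (nat \<Rightarrow> 'a list) \<Rightarrow> 'a set \<Rightarrow> nat \<Rightarrow> real" where
  "ps_time A P Items k = fst (ps_state A P Items k)"

definition ps_remaining :: "nat set \<Rightarrow> (nat \<Rightarrow> 'a list) \<Rightarrow> 'a set \<Rightarrow> nat \<Rightarrow> 'a set" where
  "ps_remaining A P Items k = fst (snd (ps_state A P Items k))"

definition exh_phase :: "nat set \<Rightarrow> (nat \<Rightarrow> 'a list) \<Rightarrow> 'a set \<Rightarrow> 'a \<Rightarrow> nat" where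
  "exh_phase A P Items x = (LEAST k. x \<notin> ps_remaining A P Items (Suc k))"

definition exh_time :: "nat set \<Rightarrow> (nat \<Rightarrow> 'a list) \<Rightarrow> 'a set \<Rightarrow> 'a \<Rightarrow> real" where
  "exh_time A P Items x = ps_time A P Items (Suc (exh_phase A P Items x))"

definition eaters_at_exh :: "nat set \<Rightarrow> (nat \<Rightarrow> 'a list) \<Rightarrow> 'a set \<Rightarrow> 'a \<Rightarrow> nat set" where
  "eaters_at_exh A P Items x =
     {i \<in> A. top_item P i (ps_remaining A P Items (exh_phase A P Items x)) = x}"

text \<open>Agent i eats item x during some phase (equivalently: receives a positive amount of x,
  since every phase has positive length).\<close>
definition eats_some :: "nat set \<Rightarrow> (nat \<Rightarrow> 'a list) \<Rightarrow> 'a set \<Rightarrow> nat \<Rightarrow> 'a \<Rightarrow> bool" where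
  "eats_some A P Items i x \<longleftrightarrow>
     (\<exists>k. x \<in> ps_remaining A P Items k \<and> top_item P i (ps_remaining A P Items k) = x)"

definition start_time :: "nat set \<Rightarrow> (nat \<Rightarrow> 'a list) \<Rightarrow> 'a set \<Rightarrow> nat \<Rightarrow> 'a \<Rightarrow> real" where
  "start_time A P Items i x =
     ps_time A P Items (LEAST k. x \<in> ps_remaining A P Items k \<and>
                               top_item P i (ps_remaining A P Items k) = x)"

end

theory Submission
  imports Defs
begin

text \<open>An agent that eats an item keeps eating it until it is exhausted, so the unit supply of
  an item is exactly the sum of what its final eaters have eaten of it, and a final eater that
  started late has eaten at most the time elapsed since it started. Two eaters exhaust \<open>o*\<close>
  at time \<open>t\<close>, hence \<open>t \<ge> 1/2\<close>. Agents 1 and 2 start on a later item \<open>x\<close> only after \<open>t\<close>, so if at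
  most one further agent eats \<open>x\<close> when it is exhausted at time \<open>t' \<le> T\<close>, then
  \<open>1 \<le> t' + 2 (t' - t) \<le> 3 T - 1 < 1\<close>.\<close>

lemma hd_filter_restrict:
  assumes "hd (filter Q xs) = x" "x \<in> set xs" "Q' x" "\<And>y. Q' y \<Longrightarrow> Q y"
  shows "hd (filter Q' xs) = x"
  using assms by (induction xs) auto

locale ps_run =
  fixes A :: "nat set" and P :: "nat \<Rightarrow> 'a list" and Items :: "'a set"
  assumes finite_agents: "finite A" and agents_nonempty: "A \<noteq> {}"
    and finite_items: "finite Items"
    and prefs: "\<forall>i \<in> A. strict_order_on Items (P i)"
begin

definition "time k = ps_time A P Items k"
definition "remaining k = ps_remaining A P Items k"
definition "supply k = snd (snd (ps_state A P Items k))"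
definition "choice k i = top_item P i (remaining k)"
definition "rate k x = eat_rate A P (remaining k) x"
definition "eaten k = choice k ` A"
definition "step_len k = Min ((\<lambda>x. supply k x / rate k x) ` eaten k)"
definition "phase_len k = time (Suc k) - time k"

definition "share i x k = (\<Sum>j<k. if choice j i = x then phase_len j else 0)"

lemma ps_state_eq: "ps_state A P Items k = (time k, remaining k, supply k)"
  by (simp add: time_def remaining_def supply_def ps_time_def ps_remaining_def)

lemma initial_state: "time 0 = 0" "remaining 0 = Items" "supply 0 = (\<lambda>_. 1)"
  using ps_state_eq[of 0] by auto

lemma step_finished:
  assumes "remaining k = {}"
  shows "time (Suc k) = time k" "remaining (Suc k) = {}" "supply (Suc k) = supply k"
  using assms ps_state_eq[of k] ps_state_eq[of "Suc k"] by (auto simp: ps_step_def)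

lemma step_running:
  assumes "remaining k \<noteq> {}"
  shows "time (Suc k) = time k + step_len k"
    "remaining (Suc k) = remaining k - {x \<in> eaten k. supply k x / rate k x = step_len k}"
    "supply (Suc k) = (\<lambda>x. supply k x - rate k x * step_len k)"
  using assms ps_state_eq[of k] ps_state_eq[of "Suc k"]
  by (auto simp: ps_step_def step_len_def eaten_def rate_def choice_def Let_def)

lemma remaining_Suc_subset: "remaining (Suc k) \<subseteq> remaining k"
  by (cases "remaining k = {}") (auto simp: step_finished step_running)

lemma remaining_antimono: "j \<le> k \<Longrightarrow> remaining k \<subseteq> remaining j"
  by (induction k rule: dec_induct) (use remaining_Suc_subset in auto)

lemma remaining_subset_Items: "remaining k \<subseteq> Items"
  using remaining_antimono[of 0 k] by (simp add: initial_state)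

lemma set_pref: "i \<in> A \<Longrightarrow> set (P i) = Items"
  using prefs by (simp add: strict_order_on_def)

lemma top_item_in:
  assumes "i \<in> A" "R \<noteq> {}" "R \<subseteq> Items"
  shows "top_item P i R \<in> R"
proof -
  have "filter (\<lambda>y. y \<in> R) (P i) \<noteq> []"
    using assms set_pref[of i] by (auto simp: filter_empty_conv)
  then show ?thesis
    unfolding top_item_def using hd_in_set by fastforce
qed

lemma top_item_restrict:
  assumes "i \<in> A" "R' \<subseteq> R" "R \<subseteq> Items" "x \<in> R'" "top_item P i R = x"
  shows "top_item P i R' = x"
  using assms set_pref[of i] hd_filter_restrict[of "\<lambda>y. y \<in> R" "P i" x "\<lambda>y. y \<in> R'"]
  by (auto simp: top_item_def)

lemma choice_persists:
  assumes "i \<in> A" "j \<le> k" "x \<in> remaining k" "choice j i = x"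
  shows "choice k i = x"
  using assms top_item_restrict[of i "remaining k" "remaining j" x]
    remaining_antimono remaining_subset_Items by (simp add: choice_def)

lemma eaten_subset_remaining: "remaining k \<noteq> {} \<Longrightarrow> eaten k \<subseteq> remaining k"
  using top_item_in remaining_subset_Items by (auto simp: eaten_def choice_def)

lemma finite_eaten: "finite (eaten k)"
  using finite_agents by (simp add: eaten_def)

lemma rate_eq_card: "rate k x = real (card {i \<in> A. choice k i = x})"
  by (simp add: rate_def eat_rate_def choice_def)

lemma rate_pos: "x \<in> eaten k \<Longrightarrow> 0 < rate k x"
  using finite_agents by (auto simp: rate_eq_card eaten_def card_gt_0_iff)

lemma rate_zero:
  assumes "x \<notin> eaten k" shows "rate k x = 0"
proof -
  have "{i \<in> A. choice k i = x} = {}" using assms by (auto simp: eaten_def)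
  then show ?thesis unfolding rate_eq_card by (metis card.empty of_nat_0)
qed

lemma step_len_attained:
  "step_len k \<in> (\<lambda>x. supply k x / rate k x) ` eaten k"
  unfolding step_len_def using finite_eaten agents_nonempty by (simp add: eaten_def)

lemma supply_pos: "x \<in> remaining k \<Longrightarrow> 0 < supply k x"
proof (induction k)
  case 0
  then show ?case by (simp add: initial_state)
next
  case (Suc k)
  have running: "remaining k \<noteq> {}" and x: "x \<in> remaining k"
    using Suc.prems remaining_Suc_subset by blast+
  show ?case
  proof (cases "x \<in> eaten k")
    case False
    then show ?thesis using Suc.IH[OF x] by (simp add: step_running[OF running] rate_zero)
  next
    case True
    have "step_len k \<le> supply k x / rate k x"
      unfolding step_len_def using True finite_eaten by simp
    moreover have "step_len k \<noteq> supply k x / rate k x"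
      using Suc.prems True by (simp add: step_running[OF running])
    ultimately have "rate k x * step_len k < supply k x"
      using rate_pos[OF True] by (simp add: field_simps)
    then show ?thesis by (simp add: step_running[OF running])
  qed
qed

lemma step_len_pos: "remaining k \<noteq> {} \<Longrightarrow> 0 < step_len k"
  using step_len_attained[of k] eaten_subset_remaining supply_pos rate_pos by fastforce

lemma phase_len_nonneg: "0 \<le> phase_len k"
  using step_len_pos[of k]
  by (cases "remaining k = {}") (auto simp: phase_len_def step_finished step_running)

lemma time_mono: "j \<le> k \<Longrightarrow> time j \<le> time k"
  by (rule lift_Suc_mono_le[of time]) (use phase_len_nonneg in \<open>auto simp: phase_len_def\<close>)

lemma time_nonneg: "0 \<le> time k"
  using time_mono[of 0 k] by (simp add: initial_state)

lemma remaining_Suc_psubset: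
  assumes "remaining k \<noteq> {}"
  shows "remaining (Suc k) \<subset> remaining k"
proof -
  obtain y where y: "y \<in> eaten k" "supply k y / rate k y = step_len k"
    using step_len_attained[of k] by (rule imageE) simp
  then have "y \<in> remaining k" using eaten_subset_remaining[OF assms] by blast
  moreover have "y \<notin> remaining (Suc k)" using y by (simp add: step_running(2)[OF assms])
  ultimately show ?thesis using remaining_Suc_subset by blast
qed

lemma card_remaining_le: "card (remaining k) \<le> card Items - k"
proof (induction k)
  case 0
  then show ?case by (simp add: initial_state)
next
  case (Suc k)
  show ?case
  proof (cases "remaining k = {}")
    case True
    then show ?thesis by (simp add: step_finished)
  next
    case False
    have "finite (remaining k)"
      using remaining_subset_Items finite_items by (rule finite_subset)
    then have "card (remaining (Suc k)) < card (remaining k)"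
      using remaining_Suc_psubset[OF False] by (rule psubset_card_mono)
    then show ?thesis using Suc.IH by linarith
  qed
qed

lemma remaining_card_Items: "remaining (card Items) = {}"
  using card_remaining_le[of "card Items"] remaining_subset_Items finite_items
  by (metis card_0_eq diff_self_eq_0 le_zero_eq rev_finite_subset)

lemma exh_phase_eq: "exh_phase A P Items x = (LEAST k. x \<notin> remaining (Suc k))"
  by (simp add: exh_phase_def remaining_def)

lemma exhausted_in_exh_phase:
  assumes "x \<in> Items"
  shows "x \<in> remaining (exh_phase A P Items x)" "x \<notin> remaining (Suc (exh_phase A P Items x))"
proof -
  have "\<exists>k. x \<notin> remaining (Suc k)"
    using remaining_card_Items remaining_Suc_subset by blast
  then show "x \<notin> remaining (Suc (exh_phase A P Items x))"
    unfolding exh_phase_eq by (rule LeastI_ex)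
  show "x \<in> remaining (exh_phase A P Items x)"
  proof (cases "exh_phase A P Items x")
    case 0
    then show ?thesis using assms by (simp add: initial_state)
  next
    case (Suc e)
    then have "\<not> x \<notin> remaining (Suc e)"
      using not_less_Least[of e "\<lambda>k. x \<notin> remaining (Suc k)"] by (simp add: exh_phase_eq)
    then show ?thesis using Suc by simp
  qed
qed

lemma supply_eq: "supply k x = 1 - (\<Sum>j<k. rate j x * phase_len j)"
proof (induction k)
  case 0
  then show ?case by (simp add: initial_state)
next
  case (Suc k)
  show ?case
  proof (cases "remaining k = {}")
    case True
    then have "phase_len k = 0" by (simp add: phase_len_def step_finished)
    then show ?thesis using Suc.IH True by (simp add: step_finished)
  next
    case False
    then show ?thesis using Suc.IH by (simp add: phase_len_def step_running)
  qed
qed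

lemma supply_at_exhaustion:
  assumes "x \<in> remaining e" "x \<notin> remaining (Suc e)"
  shows "supply e x = rate e x * phase_len e"
proof -
  have running: "remaining e \<noteq> {}" using assms by auto
  then have "x \<in> eaten e" "supply e x / rate e x = step_len e"
    using assms by (simp_all add: step_running(2)[OF running])
  then show ?thesis
    using rate_pos[of x e] by (simp add: phase_len_def step_running(1)[OF running] field_simps)
qed

lemma rate_mult_phase_len:
  "rate j x * phase_len j = (\<Sum>i\<in>A. if choice j i = x then phase_len j else 0)"
  using sum.inter_filter[OF finite_agents, of "\<lambda>_. phase_len j" "\<lambda>i. choice j i = x"]
  by (simp add: rate_eq_card)

lemma sum_share_final_eaters:
  assumes "x \<in> remaining e" "x \<notin> remaining (Suc e)"
  shows "(\<Sum>i\<in>{i \<in> A. choice e i = x}. share i x (Suc e)) = 1"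
proof -
  have "1 = (\<Sum>j<Suc e. rate j x * phase_len j)"
    using supply_eq[of e x] supply_at_exhaustion[OF assms] by simp
  also have "\<dots> = (\<Sum>i\<in>A. share i x (Suc e))"
    unfolding rate_mult_phase_len share_def by (rule sum.swap)
  also have "\<dots> = (\<Sum>i\<in>{i \<in> A. choice e i = x}. share i x (Suc e))"
  proof (rule sum.mono_neutral_right[OF finite_agents])
    show "\<forall>i\<in>A - {i \<in> A. choice e i = x}. share i x (Suc e) = 0"
    proof
      fix i assume i: "i \<in> A - {i \<in> A. choice e i = x}"
      then have "choice j i \<noteq> x" if "j < Suc e" for j
        using choice_persists[of i j e x] that assms(1) by auto
      then show "share i x (Suc e) = 0" by (simp add: share_def)
    qed
  qed auto
  finally show ?thesis by simp
qed

lemma share_le_time: "share i x k \<le> time k"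
proof -
  have "share i x k \<le> (\<Sum>j<k. phase_len j)"
    unfolding share_def by (rule sum_mono) (simp add: phase_len_nonneg)
  also have "\<dots> = time k"
    by (simp add: phase_len_def sum_lessThan_telescope initial_state)
  finally show ?thesis .
qed

lemma share_le_time_since:
  assumes "i \<in> A" "e0 < e" "x \<in> remaining e" "choice e0 i \<noteq> x"
  shows "share i x (Suc e) \<le> time (Suc e) - time (Suc e0)"
proof -
  let ?f = "\<lambda>j. if choice j i = x then phase_len j else 0"
  have early: "?f j = 0" if "j < Suc e0" for j
    using choice_persists[of i j e0 x] remaining_antimono[of e0 e] assms that by auto
  have "share i x (Suc e) = sum ?f {0..<Suc e0} + sum ?f {Suc e0..<Suc e}"
    unfolding share_def atLeast0LessThan[symmetric]
    using assms(2) by (intro sum.atLeastLessThan_concat[symmetric]) auto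
  also have "sum ?f {0..<Suc e0} = 0" using early by simp
  also have "sum ?f {Suc e0..<Suc e} \<le> sum phase_len {Suc e0..<Suc e}"
    by (rule sum_mono) (simp add: phase_len_nonneg)
  also have "\<dots> = time (Suc e) - time (Suc e0)"
    unfolding phase_len_def using assms(2) by (simp add: sum_Suc_diff')
  finally show ?thesis by simp
qed

lemma eaters_at_exh_eq:
  "eaters_at_exh A P Items x = {i \<in> A. choice (exh_phase A P Items x) i = x}"
  by (simp add: eaters_at_exh_def choice_def remaining_def)

lemma exh_time_eq: "exh_time A P Items x = time (Suc (exh_phase A P Items x))"
  by (simp add: exh_time_def time_def)

lemma exhaustion_bound:
  assumes "x \<in> Items"
  shows "1 \<le> real (card (eaters_at_exh A P Items x)) * exh_time A P Items x"
proof -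
  let ?e = "exh_phase A P Items x"
  have "1 = (\<Sum>i\<in>eaters_at_exh A P Items x. share i x (Suc ?e))"
    using sum_share_final_eaters[OF exhausted_in_exh_phase[OF assms]]
    by (simp add: eaters_at_exh_eq)
  also have "\<dots> \<le> real (card (eaters_at_exh A P Items x)) * time (Suc ?e)"
    by (rule sum_bounded_above) (rule share_le_time)
  finally show ?thesis by (simp add: exh_time_eq)
qed

lemma exhaustion_bound_late_eaters:
  assumes "x \<in> Items" and e0: "e0 < exh_phase A P Items x"
    and B: "\<And>i. i \<in> B \<Longrightarrow> choice e0 i \<noteq> x"
  shows "1 \<le> real (card (eaters_at_exh A P Items x \<inter> B)) * (exh_time A P Items x - time (Suc e0))
          + real (card (eaters_at_exh A P Items x - B)) * exh_time A P Items x"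
proof -
  define e where "e = exh_phase A P Items x"
  define E where "E = eaters_at_exh A P Items x"
  have "finite E" using finite_agents by (simp add: E_def eaters_at_exh_eq)
  have x: "x \<in> remaining e" "x \<notin> remaining (Suc e)"
    using exhausted_in_exh_phase[OF assms(1)] by (simp_all add: e_def)
  have "1 = (\<Sum>i\<in>E. share i x (Suc e))"
    using sum_share_final_eaters[OF x] by (simp add: E_def e_def eaters_at_exh_eq)
  also have "\<dots> = (\<Sum>i\<in>E \<inter> B. share i x (Suc e)) + (\<Sum>i\<in>E - B. share i x (Suc e))"
    using \<open>finite E\<close> by (rule sum.Int_Diff)
  also have "\<dots> \<le> real (card (E \<inter> B)) * (time (Suc e) - time (Suc e0))
      + real (card (E - B)) * time (Suc e)"
  proof (rule add_mono)
    show "(\<Sum>i\<in>E \<inter> B. share i x (Suc e)) \<le> real (card (E \<inter> B)) * (time (Suc e) - time (Suc e0))"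
    proof (rule sum_bounded_above)
      fix i assume "i \<in> E \<inter> B"
      then show "share i x (Suc e) \<le> time (Suc e) - time (Suc e0)"
        using share_le_time_since[of i e0 e x] e0 x(1) B
        by (simp add: E_def e_def eaters_at_exh_eq)
    qed
    show "(\<Sum>i\<in>E - B. share i x (Suc e)) \<le> real (card (E - B)) * time (Suc e)"
      by (rule sum_bounded_above) (rule share_le_time)
  qed
  finally show ?thesis by (simp add: E_def e_def exh_time_eq)
qed

theorem late_item_has_two_new_eaters:
  assumes y: "y \<in> Items" and B: "eaters_at_exh A P Items y = B" "card B \<le> 2"
    and x: "x \<in> Items" "exh_time A P Items y < exh_time A P Items x"
    and late: "exh_time A P Items x < 2/3"
  shows "2 \<le> card (eaters_at_exh A P Items x - B)"
proof (rule ccontr)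
  assume "\<not> ?thesis"
  then have few: "real (card (eaters_at_exh A P Items x - B)) \<le> 1" by simp
  define e0 where "e0 = exh_phase A P Items y"
  define t where "t = exh_time A P Items y"
  define t' where "t' = exh_time A P Items x"
  have "t' > t" "t \<ge> 0" using x(2) time_nonneg by (simp_all add: t_def t'_def exh_time_eq)
  have "1 \<le> real (card B) * t"
    using exhaustion_bound[OF y] by (simp add: B t_def)
  also have "\<dots> \<le> 2 * t" using B(2) \<open>t \<ge> 0\<close> by (intro mult_right_mono) auto
  finally have half: "1 \<le> 2 * t" .
  have before: "e0 < exh_phase A P Items x"
  proof (rule ccontr)
    assume "\<not> e0 < exh_phase A P Items x"
    then have "t' \<le> t"
      using time_mono[of "Suc (exh_phase A P Items x)" "Suc e0"]
      by (simp add: t_def t'_def e0_def exh_time_eq)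
    then show False using \<open>t' > t\<close> by simp
  qed
  have "choice e0 i \<noteq> x" if "i \<in> B" for i
  proof -
    have "choice e0 i = y" using that B(1) by (auto simp: eaters_at_exh_eq e0_def)
    moreover have "x \<noteq> y" using x(2) by auto
    ultimately show ?thesis by simp
  qed
  then have "1 \<le> real (card (eaters_at_exh A P Items x \<inter> B)) * (t' - t)
      + real (card (eaters_at_exh A P Items x - B)) * t'"
    using exhaustion_bound_late_eaters[OF x(1) before] by (simp add: t_def t'_def e0_def exh_time_eq)
  also have "\<dots> \<le> 2 * (t' - t) + 1 * t'"
  proof (rule add_mono)
    have "finite B" using finite_agents B(1) by (auto simp: eaters_at_exh_eq)
    then have "card (eaters_at_exh A P Items x \<inter> B) \<le> 2"
      using card_mono[of B] B(2) by (meson inf_le2 order_trans)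
    then show "real (card (eaters_at_exh A P Items x \<inter> B)) * (t' - t) \<le> 2 * (t' - t)"
      using \<open>t' > t\<close> by (intro mult_right_mono) auto
    show "real (card (eaters_at_exh A P Items x - B)) * t' \<le> 1 * t'"
      using few \<open>t' > t\<close> \<open>t \<ge> 0\<close> by (intro mult_right_mono) auto
  qed
  finally show False using half late by (simp add: t'_def)
qed

end

theorem lemma4:
  fixes n m k :: nat and Items :: "'a set" and P :: "nat \<Rightarrow> 'a list"
    and ostar :: 'a and a2 :: nat and T t1 t2 :: real
  assumes fin: "finite Items" and card_items: "card Items = m" and mn: "m \<le> n"
    and prefs: "\<forall>i \<in> {1..n}. strict_order_on Items (P i)"
    and k: "1 \<le> k" "k \<le> m"
    and T_def: "T = Max (exh_time {1..n} P Items ` set (take k (P 1)))"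
    and T_bounds: "1/2 \<le> T" "T < 2/3"
    and ostar_in: "ostar \<in> set (take k (P 1))"
    and pos: "eats_some {1..n} P Items 1 ostar"
    and a2: "a2 \<noteq> 1"
    and eaters: "eaters_at_exh {1..n} P Items ostar = {1, a2}"
    and t1_def: "t1 = start_time {1..n} P Items 1 ostar"
    and t2_def: "t1 + t2 = exh_time {1..n} P Items ostar"
  shows "\<forall>x \<in> Items. t1 + t2 < exh_time {1..n} P Items x \<and> exh_time {1..n} P Items x \<le> T
           \<longrightarrow> card (eaters_at_exh {1..n} P Items x - {1, a2}) \<ge> 2"
proof -
  have agent1: "1 \<in> {1..n}" using eaters by (auto simp: eaters_at_exh_def)
  interpret ps_run "{1..n}" P Items
    using fin prefs agent1 by unfold_locales auto
  have "ostar \<in> Items" using ostar_in set_pref[OF agent1] in_set_takeD by fastforce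
  moreover have "card {1, a2} \<le> 2" by (simp add: card_insert_if)
  ultimately show ?thesis
    using late_item_has_two_new_eaters[OF _ eaters] T_bounds(2) t2_def by fastforce
qed

end
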